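(* Let $X$ be a non-empty set and let $\mathcal{U}\subseteq P(X)$ be anti-closed under finite intersections. Then $\mathcal{U}$ is anti-closed under arbitrary unions.
   Context: For a family $\mathcal{U}\subseteq P(X)$: $\mathcal{U}$ is anti-closed under finite intersections if for every $n\in\mathbb{N}$ and all $A_1,\dots,A_n\in\mathcal{U}$ that are not all equal, $\bigcap_{i=1}^n A_i\notin\mathcal{U}$; $\mathcal{U}$ is anti-closed under arbitrary intersections if for every non-empty index set $J$ and all $A_i\in\mathcal{U}$ ($i\in J$) not all equal, $\bigcap_{i\in J}A_i\notin\mathcal{U}$; $\mathcal{U}$ is anti-closed under arbitrary unions if for every non-empty index set $J$ and all $A_i\in\mathcal{U}$ ($i\in J$) not all equal, $\bigcup_{i\in J}A_i\notin\mathcal{U}$. *)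

theory Defs
  imports Main
begin

definition anti_closed_fin_inter :: "'a set set \<Rightarrow> bool" where
  "anti_closed_fin_inter U \<longleftrightarrow>
     (\<forall>(n::nat) (A::nat \<Rightarrow> 'a set).
        (\<forall>i\<in>{1..n}. A i \<in> U) \<and> (\<exists>i\<in>{1..n}. \<exists>j\<in>{1..n}. A i \<noteq> A j)
        \<longrightarrow> (\<Inter>i\<in>{1..n}. A i) \<notin> U)"

definition anti_closed_arb_inter :: "'a set set \<Rightarrow> 'i itself \<Rightarrow> bool" where
  "anti_closed_arb_inter U _ \<longleftrightarrow>
     (\<forall>(J::'i set) (A::'i \<Rightarrow> 'a set).
        J \<noteq> {} \<and> (\<forall>i\<in>J. A i \<in> U) \<and> (\<exists>i\<in>J. \<exists>j\<in>J. A i \<noteq> A j)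
        \<longrightarrow> (\<Inter>i\<in>J. A i) \<notin> U)"

definition anti_closed_arb_union :: "'a set set \<Rightarrow> 'i itself \<Rightarrow> bool" where
  "anti_closed_arb_union U _ \<longleftrightarrow>
     (\<forall>(J::'i set) (A::'i \<Rightarrow> 'a set).
        J \<noteq> {} \<and> (\<forall>i\<in>J. A i \<in> U) \<and> (\<exists>i\<in>J. \<exists>j\<in>J. A i \<noteq> A j)
        \<longrightarrow> (\<Union>i\<in>J. A i) \<notin> U)"

end

theory Submission
  imports Defs
begin

text \<open>A family anti-closed under finite intersections is an antichain: if \<open>A \<subset> B\<close> in U,
  then \<open>A \<inter> B = A\<close> is an intersection of two distinct members lying in U. A union of
  members contains each of them, so if it lay in U all the members would be equal to it.\<close>

lemma anti_closed_fin_inter_subset_eq: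
  assumes "anti_closed_fin_inter U" "A \<in> U" "B \<in> U" "A \<subseteq> B"
  shows "A = B"
proof (rule ccontr)
  assume "A \<noteq> B"
  define F where "F = (\<lambda>i::nat. if i = 1 then A else B)"
  have two: "{1..2::nat} = {1, 2}" by auto
  have "(\<Inter>i\<in>{1..2}. F i) = A"
    using \<open>A \<subseteq> B\<close> by (auto simp: F_def two)
  moreover have "(\<forall>i\<in>{1..2}. F i \<in> U) \<and> (\<exists>i\<in>{1..2}. \<exists>j\<in>{1..2}. F i \<noteq> F j)"
    using \<open>A \<in> U\<close> \<open>B \<in> U\<close> \<open>A \<noteq> B\<close> unfolding two F_def by (auto intro!: bexI[of _ 1] bexI[of _ 2])
  then have "(\<Inter>i\<in>{1..2}. F i) \<notin> U"
    using assms(1) unfolding anti_closed_fin_inter_def by blast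
  ultimately show False
    using \<open>A \<in> U\<close> by simp
qed

theorem mainTheorem4:
  fixes X :: "'a set" and U :: "'a set set"
  assumes "X \<noteq> {}"
    and "U \<subseteq> Pow X"
    and "anti_closed_fin_inter U"
  shows "anti_closed_arb_union U TYPE('i)"
  unfolding anti_closed_arb_union_def
proof (intro allI impI notI)
  fix J :: "'i set" and A
  assume "J \<noteq> {} \<and> (\<forall>i\<in>J. A i \<in> U) \<and> (\<exists>i\<in>J. \<exists>j\<in>J. A i \<noteq> A j)"
    and union_in: "(\<Union>i\<in>J. A i) \<in> U"
  then obtain i j where "i \<in> J" "j \<in> J" "A i \<noteq> A j" and members: "\<forall>k\<in>J. A k \<in> U"
    by blast
  have all_eq_union: "A k = (\<Union>i\<in>J. A i)" if "k \<in> J" for k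
    using anti_closed_fin_inter_subset_eq[OF assms(3) _ union_in] members that by blast
  show False
    using all_eq_union[OF \<open>i \<in> J\<close>] all_eq_union[OF \<open>j \<in> J\<close>] \<open>A i \<noteq> A j\<close> by argo
qed

end
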